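(* If $g_N\in H_N^{\mathrm{rw}}$ converges weakly to $g\in H^{\mathrm{bm}}$ with respect to the Hilbert space convergence $H_N^{\mathrm{rw}}\to H^{\mathrm{bm}}$, then $\lim_{N\to\infty}\frac1N g_N(0)=0$.
   Context: $H_N^{\mathrm{rw}}=L^2(\frac1N\mathbb Z,\mu_N)$ where $\mu_N$ gives mass $\frac1N$ to each point; $H^{\mathrm{bm}}=L^2(\mathbb R,dx)$. Hilbert convergence is witnessed by $C=C_c^\infty(\mathbb R)$ and $\Phi_Nf=f|_{\frac1N\mathbb Z}$. Strong convergence $h_N\to h$: there exist $\tilde h_M\in C$ with $\|\tilde h_M-h\|_{H^{\mathrm{bm}}}\to0$ and $\lim_M\limsup_N\|\Phi_N\tilde h_M-h_N\|_{H_N^{\mathrm{rw}}}=0$. Weak convergence $g_N\to g$: $\langle g_N,h_N\rangle_{H_N^{\mathrm{rw}}}\to\langle g,h\rangle_{H^{\mathrm{bm}}}$ for every strongly convergent $h_N\to h$. *)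

theory Defs
  imports "HOL-Analysis.Analysis"
begin

definition smooth_real :: "(real \<Rightarrow> real) \<Rightarrow> bool" where
  "smooth_real f \<longleftrightarrow> (\<forall>k x. (deriv ^^ k) f differentiable (at x))"

definition Cc_inf :: "(real \<Rightarrow> real) set" where
  "Cc_inf = {f. smooth_real f \<and> (\<exists>a b. \<forall>x. x \<notin> {a..b} \<longrightarrow> f x = 0)}"

(* H^bm = L^2(R, dx) (functions representing classes) *)
definition in_Hbm :: "(real \<Rightarrow> real) \<Rightarrow> bool" where
  "in_Hbm f \<longleftrightarrow> f \<in> borel_measurable lborel \<and> integrable lborel (\<lambda>x. (f x)\<^sup>2)"

definition inner_bm :: "(real \<Rightarrow> real) \<Rightarrow> (real \<Rightarrow> real) \<Rightarrow> real" where
  "inner_bm f g = (LINT x|lborel. f x * g x)"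

definition norm_bm :: "(real \<Rightarrow> real) \<Rightarrow> real" where
  "norm_bm f = sqrt (LINT x|lborel. (f x)\<^sup>2)"

(* H_N^rw = L^2((1/N)Z, mu_N); an element is represented by h :: int => real,
   h k being the value at the lattice point k/N *)
definition in_Hrw :: "nat \<Rightarrow> (int \<Rightarrow> real) \<Rightarrow> bool" where
  "in_Hrw N h \<longleftrightarrow> (\<lambda>k. (h k)\<^sup>2) summable_on UNIV"

definition inner_rw :: "nat \<Rightarrow> (int \<Rightarrow> real) \<Rightarrow> (int \<Rightarrow> real) \<Rightarrow> real" where
  "inner_rw N g h = (\<Sum>\<^sub>\<infinity>k. g k * h k / real N)"

definition norm_rw :: "nat \<Rightarrow> (int \<Rightarrow> real) \<Rightarrow> real" where
  "norm_rw N h = sqrt (\<Sum>\<^sub>\<infinity>k. (h k)\<^sup>2 / real N)"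

definition Phi :: "nat \<Rightarrow> (real \<Rightarrow> real) \<Rightarrow> (int \<Rightarrow> real)" where
  "Phi N f = (\<lambda>k. f (real_of_int k / real N))"

definition strong_conv :: "(nat \<Rightarrow> int \<Rightarrow> real) \<Rightarrow> (real \<Rightarrow> real) \<Rightarrow> bool" where
  "strong_conv hN h \<longleftrightarrow>
     (\<forall>N\<ge>1. in_Hrw N (hN N)) \<and> in_Hbm h \<and>
     (\<exists>ht :: nat \<Rightarrow> real \<Rightarrow> real. (\<forall>M. ht M \<in> Cc_inf) \<and>
        (\<lambda>M. norm_bm (\<lambda>x. ht M x - h x)) \<longlonglongrightarrow> 0 \<and>
        (\<lambda>M. limsup (\<lambda>N. ereal (norm_rw N (\<lambda>k. Phi N (ht M) k - hN N k)))) \<longlonglongrightarrow> 0)"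

definition weak_conv :: "(nat \<Rightarrow> int \<Rightarrow> real) \<Rightarrow> (real \<Rightarrow> real) \<Rightarrow> bool" where
  "weak_conv gN g \<longleftrightarrow>
     (\<forall>N\<ge>1. in_Hrw N (gN N)) \<and> in_Hbm g \<and>
     (\<forall>hN h. strong_conv hN h \<longrightarrow>
        (\<lambda>N. inner_rw N (gN N) (hN N)) \<longlonglongrightarrow> inner_bm g h)"

end

theory Submission
  imports Defs
begin

text \<open>Test the weak convergence against the unit masses at the origin,
  \<open>\<delta>\<^sub>N k = (if k = 0 then 1 else 0)\<close>. Their norm in \<open>H\<^sub>N\<close> is \<open>sqrt (1/N) \<rightarrow> 0\<close>, so they
  converge strongly to \<open>0\<close>, and hence \<open>g\<^sub>N 0 / N = \<langle>g\<^sub>N, \<delta>\<^sub>N\<rangle> \<rightarrow> \<langle>g, 0\<rangle> = 0\<close>.\<close>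

lemma has_sum_single_support:
  fixes f :: "'a \<Rightarrow> 'b::{comm_monoid_add, topological_space}"
  assumes "\<And>x. x \<noteq> a \<Longrightarrow> f x = 0"
  shows "(f has_sum f a) UNIV"
proof -
  have "(f has_sum f a) {a}"
    by (simp add: has_sum_finiteI)
  then show ?thesis
    by (subst has_sum_cong_neutral[where T = "{a}"]) (use assms in auto)
qed

lemma funpow_deriv_zero: "(deriv ^^ k) (\<lambda>_::real. 0::real) = (\<lambda>_. 0)"
  by (induction k) (auto simp: deriv_const)

lemma zero_in_Cc_inf: "(\<lambda>_. 0) \<in> Cc_inf"
  unfolding Cc_inf_def smooth_real_def by (auto simp: funpow_deriv_zero)

lemma strong_conv_zeroI:
  assumes "\<And>N. N \<ge> 1 \<Longrightarrow> in_Hrw N (hN N)"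
    and "(\<lambda>N. norm_rw N (hN N)) \<longlonglongrightarrow> 0"
  shows "strong_conv hN (\<lambda>_. 0)"
  unfolding strong_conv_def
proof (intro conjI allI impI exI[of _ "\<lambda>M x. 0"])
  have "(\<lambda>N. ereal (norm_rw N (hN N))) \<longlonglongrightarrow> 0"
    using tendsto_ereal[OF assms(2)] by (simp add: zero_ereal_def)
  then have "limsup (\<lambda>N. ereal (norm_rw N (hN N))) = 0"
    by (simp add: lim_imp_Limsup)
  moreover have "norm_rw N (\<lambda>k. Phi N (\<lambda>x. 0) k - hN N k) = norm_rw N (hN N)" for N
    by (simp add: norm_rw_def Phi_def)
  ultimately show "(\<lambda>M. limsup (\<lambda>N. ereal (norm_rw N (\<lambda>k. Phi N (\<lambda>x. 0) k - hN N k))))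
      \<longlonglongrightarrow> 0"
    by simp
qed (use assms(1) zero_in_Cc_inf in \<open>auto simp: in_Hbm_def norm_bm_def\<close>)

theorem proposition5p10:
  fixes gN :: "nat \<Rightarrow> int \<Rightarrow> real" and g :: "real \<Rightarrow> real"
  assumes "weak_conv gN g"
  shows "(\<lambda>N. gN N 0 / real N) \<longlonglongrightarrow> 0"
proof -
  define \<delta> :: "nat \<Rightarrow> int \<Rightarrow> real" where "\<delta> = (\<lambda>N k. if k = 0 then 1 else 0)"
  have in_Hrw_\<delta>: "in_Hrw N (\<delta> N)" for N
    using has_sum_single_support[of 0 "\<lambda>k. (\<delta> N k)\<^sup>2"]
    by (auto simp: in_Hrw_def \<delta>_def dest: has_sum_imp_summable)
  have "norm_rw N (\<delta> N) = sqrt (1 / real N)" for N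
    using has_sum_single_support[of 0 "\<lambda>k. (\<delta> N k)\<^sup>2 / real N"]
    by (simp add: norm_rw_def \<delta>_def infsumI)
  moreover have "(\<lambda>N. sqrt (1 / real N)) \<longlonglongrightarrow> 0"
    using tendsto_real_sqrt[OF lim_inverse_n'] by (simp add: inverse_eq_divide)
  ultimately have "strong_conv \<delta> (\<lambda>_. 0)"
    by (intro strong_conv_zeroI in_Hrw_\<delta>) simp
  then have "(\<lambda>N. inner_rw N (gN N) (\<delta> N)) \<longlonglongrightarrow> inner_bm g (\<lambda>_. 0)"
    using assms unfolding weak_conv_def by blast
  moreover have "inner_rw N (gN N) (\<delta> N) = gN N 0 / real N" for N
    using has_sum_single_support[of 0 "\<lambda>k. gN N k * \<delta> N k / real N"]
    by (simp add: inner_rw_def \<delta>_def infsumI)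
  ultimately show ?thesis
    by (simp add: inner_bm_def)
qed

end
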